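(* $\mathfrak{mac}(\mathsf{null}\setminus\{\emptyset\},\subseteq)=\mathfrak{c}$.
   Context: $\mathsf{null}$ is the ideal of Lebesgue measure zero subsets of $2^\omega$, ordered by inclusion. For a poset $P$, an antichain is a set of pairwise incomparable elements and $\mathfrak{mac}(P)$ is the minimal cardinality of a maximal (under inclusion) antichain. $\mathfrak{c}=2^{\aleph_0}$. *)

theory Defs
  imports "HOL-Probability.Probability"
begin

text \<open>Cantor space 2^omega as nat => bool, with the Lebesgue (fair coin product) measure.\<close>
definition cantor_measure :: "(nat \<Rightarrow> bool) measure" where
  "cantor_measure = (\<Pi>\<^sub>M i\<in>(UNIV::nat set). measure_pmf (bernoulli_pmf (1/2)))"

text \<open>The ideal of Lebesgue null subsets (Lebesgue measure is complete, so these are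
  exactly the subsets of measurable sets of measure zero).\<close>
definition null_ideal :: "(nat \<Rightarrow> bool) set set" where
  "null_ideal = {A. \<exists>B\<in>sets cantor_measure. A \<subseteq> B \<and> emeasure cantor_measure B = 0}"

definition antichain_in :: "'a set set \<Rightarrow> 'a set set \<Rightarrow> bool" where
  "antichain_in P A \<longleftrightarrow> A \<subseteq> P \<and> (\<forall>x\<in>A. \<forall>y\<in>A. x \<noteq> y \<longrightarrow> \<not> x \<subseteq> y \<and> \<not> y \<subseteq> x)"

definition maximal_antichain_in :: "'a set set \<Rightarrow> 'a set set \<Rightarrow> bool" where
  "maximal_antichain_in P A \<longleftrightarrow> antichain_in P A \<and> (\<forall>B. antichain_in P B \<and> A \<subseteq> B \<longrightarrow> B = A)"

end

theory Submission imports Defs begin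

(*
  The null sets form an ideal that contains all singletons and whose members have complements
  of size c: if B is null and t is arbitrary, the null set B \<union> (B xor t) misses some x, so
  t = x xor (x xor t) is a sum of two points outside B.  The singletons are then a maximal
  antichain of size c.  Conversely, suppose A is a maximal antichain with |A| < c, and let
  p \<in> a \<in> A.  If no member of A contained a - {p} while avoiding p, then for each x \<notin> a
  the only members of A comparable with (a - {p}) \<union> {x} would contain x and lie inside that
  set; this injects the complement of a, of size c, into A.  So each p \<in> a has such a
  witness, different points having different witnesses, whence |a| \<le> |A|.  As A covers the
  whole space, c \<le> |\<Union>A| \<le> |A|, a contradiction.
*)

unbundle cardinal_syntax

lemma card_of_ordLeq_injective_witness:
  assumes "\<And>x. x \<in> X \<Longrightarrow> \<exists>y\<in>Y. R x y"
    and "\<And>x x' y. x \<in> X \<Longrightarrow> x' \<in> X \<Longrightarrow> R x y \<Longrightarrow> R x' y \<Longrightarrow> x = x'"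
  shows "|X| \<le>o |Y|"
proof -
  obtain f where f: "\<And>x. x \<in> X \<Longrightarrow> f x \<in> Y \<and> R x (f x)"
    using bchoice[of X "\<lambda>x y. y \<in> Y \<and> R x y"] assms(1) by blast
  have "inj_on f X"
    using f assms(2) by (metis inj_onI)
  then show ?thesis
    using f card_of_ordLeq by blast
qed

lemma antichain_in_subset_eq:
  "antichain_in P A \<Longrightarrow> a \<in> A \<Longrightarrow> b \<in> A \<Longrightarrow> a \<subseteq> b \<Longrightarrow> a = b"
  unfolding antichain_in_def by blast

lemma maximal_antichain_in_comparable:
  assumes "maximal_antichain_in P A" "S \<in> P"
  shows "\<exists>a\<in>A. a \<subseteq> S \<or> S \<subseteq> a"
proof (rule ccontr)
  assume incomparable: "\<not> ?thesis"
  then have "antichain_in P (insert S A)"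
    using assms unfolding maximal_antichain_in_def antichain_in_def by blast
  then have "S \<in> A"
    using assms(1) unfolding maximal_antichain_in_def by blast
  then show False
    using incomparable by blast
qed

lemma maximal_antichain_in_singletons:
  assumes "\<And>x. {x} \<in> P" "{} \<notin> P"
  shows "maximal_antichain_in P (range (\<lambda>x. {x}))"
  unfolding maximal_antichain_in_def
proof (intro conjI allI impI)
  show "antichain_in P (range (\<lambda>x. {x}))"
    using assms(1) unfolding antichain_in_def by auto
  fix B assume B: "antichain_in P B \<and> range (\<lambda>x. {x}) \<subseteq> B"
  have "b \<in> range (\<lambda>x. {x})" if b: "b \<in> B" for b
  proof -
    have "b \<noteq> {}"
      using B b assms(2) unfolding antichain_in_def by blast
    then obtain x where "x \<in> b" by blast
    then have "{x} = b"
      using B b by (intro antichain_in_subset_eq[of P B]) auto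
    then show ?thesis by blast
  qed
  then show "B = range (\<lambda>x. {x})"
    using B by blast
qed

locale small_set_ideal =
  fixes I :: "'a set set"
  assumes empty_in: "{} \<in> I"
    and subset_closed: "S \<in> I \<Longrightarrow> T \<subseteq> S \<Longrightarrow> T \<in> I"
    and insert_closed: "S \<in> I \<Longrightarrow> insert x S \<in> I"
    and UNIV_ordLeq_Compl: "S \<in> I \<Longrightarrow> |UNIV :: 'a set| \<le>o |- S|"
begin

lemma singleton_in: "{x} \<in> I"
  using insert_closed[OF empty_in] .

lemma infinite_UNIV: "infinite (UNIV :: 'a set)"
proof
  assume fin: "finite (UNIV :: 'a set)"
  fix x :: 'a
  have "\<exists>f :: 'a \<Rightarrow> 'a. inj f \<and> range f \<subseteq> - {x}"
    using UNIV_ordLeq_Compl[OF singleton_in] by (simp only: card_of_ordLeq)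
  then obtain f :: "'a \<Rightarrow> 'a" where "inj f" "range f \<subseteq> - {x}"
    by blast
  then show False
    using finite_UNIV_inj_surj[OF fin] by blast
qed

lemma maximal_antichain_deletion_witness:
  assumes M: "maximal_antichain_in (I - {{}}) A" and a0: "a0 \<in> A" and p: "p \<in> a0"
    and small: "\<not> |UNIV :: 'a set| \<le>o |A|"
  shows "\<exists>a\<in>A. a0 - {p} \<subseteq> a \<and> p \<notin> a"
proof (rule ccontr)
  assume none: "\<not> ?thesis"
  have anti: "antichain_in (I - {{}}) A"
    using M unfolding maximal_antichain_in_def by blast
  then have a0_in: "a0 \<in> I"
    using a0 unfolding antichain_in_def by blast
  have "\<exists>a\<in>A. x \<in> a \<and> a \<subseteq> insert x (a0 - {p})" if x: "x \<in> - a0" for x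
  proof -
    have "a0 - {p} \<in> I"
      using subset_closed[OF a0_in] by blast
    then have "insert x (a0 - {p}) \<in> I - {{}}"
      using insert_closed[of "a0 - {p}" x] by blast
    then obtain a where a: "a \<in> A" "a \<subseteq> insert x (a0 - {p}) \<or> insert x (a0 - {p}) \<subseteq> a"
      using maximal_antichain_in_comparable[OF M] by blast
    have "\<not> insert x (a0 - {p}) \<subseteq> a"
    proof
      assume "insert x (a0 - {p}) \<subseteq> a"
      then have "a0 \<subseteq> a" "x \<in> a"
        using none a(1) by blast+
      then show False
        using antichain_in_subset_eq[OF anti a0 a(1)] x by blast
    qed
    then have "a \<subseteq> insert x (a0 - {p})"
      using a(2) by blast
    moreover have "x \<in> a"
    proof (rule ccontr)
      assume "x \<notin> a"
      then have "a \<subseteq> a0" "p \<notin> a"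
        using \<open>a \<subseteq> insert x (a0 - {p})\<close> by blast+
      then show False
        using antichain_in_subset_eq[OF anti a(1) a0] p by blast
    qed
    ultimately show ?thesis
      using a(1) by blast
  qed
  then have "|- a0| \<le>o |A|"
    by (rule card_of_ordLeq_injective_witness) auto
  moreover have "|UNIV :: 'a set| \<le>o |- a0|"
    using UNIV_ordLeq_Compl[OF a0_in] .
  ultimately show False
    using small ordLeq_transitive by blast
qed

lemma card_of_maximal_antichain_member:
  assumes M: "maximal_antichain_in (I - {{}}) A" and a0: "a0 \<in> A"
    and small: "\<not> |UNIV :: 'a set| \<le>o |A|"
  shows "|a0| \<le>o |A|"
proof (rule card_of_ordLeq_injective_witness)
  show "\<exists>a\<in>A. a0 - {p} \<subseteq> a \<and> p \<notin> a" if "p \<in> a0" for p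
    using maximal_antichain_deletion_witness[OF M a0 that small] .
qed blast

lemma maximal_antichain_covers:
  assumes M: "maximal_antichain_in (I - {{}}) A"
  shows "\<Union> A = UNIV"
proof -
  have "x \<in> \<Union> A" for x
  proof -
    obtain a where "a \<in> A" "a \<subseteq> {x} \<or> {x} \<subseteq> a"
      using maximal_antichain_in_comparable[OF M] singleton_in by blast
    moreover have "a \<noteq> {}"
      using M \<open>a \<in> A\<close> unfolding maximal_antichain_in_def antichain_in_def by blast
    ultimately show ?thesis by blast
  qed
  then show ?thesis by blast
qed

lemma card_of_maximal_antichain:
  assumes M: "maximal_antichain_in (I - {{}}) A"
  shows "|UNIV :: 'a set| \<le>o |A|"
proof (rule ccontr)
  assume small: "\<not> |UNIV :: 'a set| \<le>o |A|"
  have members: "\<forall>a\<in>A. |a| \<le>o |A|"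
    using card_of_maximal_antichain_member[OF M _ small] by blast
  show False
  proof (cases "finite A")
    case True
    then have "finite (\<Union> A)"
      using members card_of_ordLeq_finite by blast
    then show False
      using maximal_antichain_covers[OF M] infinite_UNIV by simp
  next
    case False
    then have "|\<Union> A| \<le>o |A|"
      using card_of_UNION_ordLeq_infinite[OF False ordIso_imp_ordLeq[OF card_of_refl] members]
      by simp
    then show False
      using maximal_antichain_covers[OF M] small by simp
  qed
qed

lemma exists_maximal_antichain_card_UNIV:
  "\<exists>A. maximal_antichain_in (I - {{}}) A \<and> (card_of A, card_of (UNIV :: 'a set)) \<in> ordIso"
proof (intro exI conjI)
  show "maximal_antichain_in (I - {{}}) (range (\<lambda>x. {x}))"
    by (rule maximal_antichain_in_singletons) (auto simp: singleton_in)
  have "bij_betw (\<lambda>x. {x}) UNIV (range (\<lambda>x :: 'a. {x}))"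
    by (auto simp: bij_betw_def inj_def)
  then show "(card_of (range (\<lambda>x :: 'a. {x})), card_of (UNIV :: 'a set)) \<in> ordIso"
    using card_of_ordIso[of UNIV "range (\<lambda>x :: 'a. {x})"] ordIso_symmetric by blast
qed

end

lemma (in product_prob_space) distr_PiM_componentwise:
  assumes meas: "\<And>i. i \<in> I \<Longrightarrow> f i \<in> M i \<rightarrow>\<^sub>M M i"
    and preserving: "\<And>i. i \<in> I \<Longrightarrow> distr (M i) (M i) (f i) = M i"
  shows "distr (PiM I M) (PiM I M) (\<lambda>x. \<lambda>i\<in>I. f i (x i)) = PiM I M"
proof (rule PiM_eq)
  let ?g = "\<lambda>x. \<lambda>i\<in>I. f i (x i)"
  have g: "?g \<in> PiM I M \<rightarrow>\<^sub>M PiM I M"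
    using meas by (intro measurable_restrict measurable_compose[OF measurable_component_singleton]) auto
  fix J F assume J: "finite J" "J \<subseteq> I" and F: "\<And>j. j \<in> J \<Longrightarrow> F j \<in> sets (M j)"
  have "?g -` prod_emb I M J (PiE J F) \<inter> space (PiM I M)
      = prod_emb I M J (\<Pi>\<^sub>E j\<in>J. f j -` F j \<inter> space (M j))"
    using J(2) meas[THEN measurable_space]
    by (auto simp: prod_emb_def space_PiM PiE_iff Pi_iff subset_eq)
  then have "emeasure (distr (PiM I M) (PiM I M) ?g) (prod_emb I M J (PiE J F))
      = emeasure (PiM I M) (prod_emb I M J (\<Pi>\<^sub>E j\<in>J. f j -` F j \<inter> space (M j)))"
    using J F g by (simp add: emeasure_distr sets_PiM_I)
  also have "\<dots> = (\<Prod>j\<in>J. emeasure (M j) (f j -` F j \<inter> space (M j)))"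
    using J F meas by (intro emeasure_PiM_emb) auto
  also have "\<dots> = (\<Prod>j\<in>J. emeasure (M j) (F j))"
  proof (rule prod.cong)
    fix j assume "j \<in> J"
    then have "j \<in> I"
      using J(2) by blast
    show "emeasure (M j) (f j -` F j \<inter> space (M j)) = emeasure (M j) (F j)"
      using emeasure_distr[OF meas[OF \<open>j \<in> I\<close>] F[OF \<open>j \<in> J\<close>]] preserving[OF \<open>j \<in> I\<close>]
      by simp
  qed simp
  finally show "emeasure (distr (PiM I M) (PiM I M) ?g) (prod_emb I M J (PiE J F))
      = (\<Prod>j\<in>J. emeasure (M j) (F j))" .
qed simp

lemma distr_bernoulli_half_xor:
  "distr (measure_pmf (bernoulli_pmf (1/2))) (measure_pmf (bernoulli_pmf (1/2))) (\<lambda>b. b \<noteq> c)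
    = measure_pmf (bernoulli_pmf (1/2))"
proof -
  have "bij (\<lambda>b :: bool. b \<noteq> c)"
    by (rule involuntory_imp_bij) auto
  then have "map_pmf (\<lambda>b. b \<noteq> c) (bernoulli_pmf (1/2)) = bernoulli_pmf (1/2)"
    by (simp add: bernoulli_pmf_half_conv_pmf_of_set map_pmf_of_set_bij_betw)
  then have "distr (measure_pmf (bernoulli_pmf (1/2))) (count_space UNIV) (\<lambda>b. b \<noteq> c)
      = measure_pmf (bernoulli_pmf (1/2))"
    by (simp add: map_pmf_rep_eq[symmetric])
  then show ?thesis
    by (simp add: distr_cong[OF refl, of "measure_pmf _" "count_space UNIV"])
qed

definition cantor_xor :: "(nat \<Rightarrow> bool) \<Rightarrow> (nat \<Rightarrow> bool) \<Rightarrow> nat \<Rightarrow> bool" where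
  "cantor_xor s x = (\<lambda>i. x i \<noteq> s i)"

lemma cantor_xor_cancel: "cantor_xor s (cantor_xor x s) = x"
  by (auto simp: cantor_xor_def)

lemma prob_space_cantor_measure: "prob_space cantor_measure"
  unfolding cantor_measure_def by (intro prob_space_PiM prob_space_measure_pmf)

lemma space_cantor_measure [simp]: "space cantor_measure = UNIV"
  unfolding cantor_measure_def by (simp add: space_PiM)

lemma measurable_cantor_xor: "cantor_xor s \<in> cantor_measure \<rightarrow>\<^sub>M cantor_measure"
  unfolding cantor_measure_def cantor_xor_def by (rule measurable_PiM_single') auto

lemma distr_cantor_xor: "distr cantor_measure cantor_measure (cantor_xor s) = cantor_measure"
proof -
  interpret product_prob_space "\<lambda>_. measure_pmf (bernoulli_pmf (1/2))" UNIV
    by unfold_locales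
  have "cantor_xor s = (\<lambda>x. \<lambda>i\<in>UNIV. x i \<noteq> s i)"
    by (simp add: fun_eq_iff cantor_xor_def)
  then show ?thesis
    unfolding cantor_measure_def
    by (simp only:) (rule distr_PiM_componentwise[OF _ distr_bernoulli_half_xor]; simp)
qed

lemma cantor_singleton_null: "{x} \<in> null_sets cantor_measure"
proof -
  interpret product_prob_space "\<lambda>_. measure_pmf (bernoulli_pmf (1/2))" UNIV
    by unfold_locales
  define C where "C n = {y \<in> space cantor_measure. \<forall>i\<in>{..<n}. y i \<in> {x i}}" for n
  have C_sets: "C n \<in> sets cantor_measure" for n
    unfolding C_def cantor_measure_def
    by (rule sets.sets_Collect_finite_All) (auto intro!: sets_Collect_single')
  have C_measure: "emeasure cantor_measure (C n) = ennreal ((1/2) ^ n)" for n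
    unfolding C_def cantor_measure_def
    by (subst emeasure_PiM_Collect) (auto simp: emeasure_pmf_single ennreal_power[symmetric])
  have singleton_eq: "{x} = (\<Inter>n. C n)"
    by (auto simp: C_def fun_eq_iff)
  then have x_sets: "{x} \<in> sets cantor_measure"
    using C_sets by auto
  have le: "emeasure cantor_measure {x} \<le> ennreal ((1/2) ^ n)" for n
    using emeasure_mono[OF _ C_sets, of "{x}" n] singleton_eq C_measure by auto
  have "(\<lambda>n. ennreal ((1/2) ^ n)) \<longlonglongrightarrow> ennreal 0"
    by (intro tendsto_ennrealI LIMSEQ_power_zero) auto
  then have "emeasure cantor_measure {x} \<le> ennreal 0"
    using le by (intro LIMSEQ_le_const) auto
  then show ?thesis
    using x_sets by auto
qed

lemma cantor_xor_vimage_null: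
  assumes "B \<in> null_sets cantor_measure"
  shows "cantor_xor s -` B \<in> null_sets cantor_measure"
  using assms null_sets_distr_iff[OF measurable_cantor_xor, of B s]
  by (simp add: distr_cantor_xor)

lemma infinite_UNIV_cantor: "infinite (UNIV :: (nat \<Rightarrow> bool) set)"
  using finite_fun_UNIVD1[where 'a = nat and 'b = bool] by auto

lemma card_of_Compl_null:
  assumes B: "B \<in> null_sets cantor_measure"
  shows "|UNIV :: (nat \<Rightarrow> bool) set| \<le>o |- B|"
proof -
  interpret prob_space cantor_measure
    by (rule prob_space_cantor_measure)
  have cover: "UNIV \<subseteq> (\<lambda>(x, y). cantor_xor x y) ` ((- B) \<times> (- B))"
  proof
    fix t
    have "B \<union> cantor_xor t -` B \<in> null_sets cantor_measure"
      using null_sets.Un[OF B cantor_xor_vimage_null[OF B]] .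
    then have "B \<union> cantor_xor t -` B \<noteq> UNIV"
      using emeasure_space_1 by (metis null_setsD1 space_cantor_measure zero_neq_one)
    then obtain x where "x \<notin> B" "cantor_xor t x \<notin> B"
      by blast
    then show "t \<in> (\<lambda>(x, y). cantor_xor x y) ` ((- B) \<times> (- B))"
      by (intro image_eqI[of _ _ "(x, cantor_xor t x)"]) (simp_all add: cantor_xor_cancel)
  qed
  then have "|UNIV :: (nat \<Rightarrow> bool) set| \<le>o |(- B) \<times> (- B)|"
    by (rule surj_imp_ordLeq)
  moreover have "infinite (- B)"
  proof
    assume "finite (- B)"
    then have "finite ((\<lambda>(x, y). cantor_xor x y) ` ((- B) \<times> (- B)))"
      by simp
    then show False
      using finite_subset[OF cover] infinite_UNIV_cantor by blast
  qed
  ultimately show ?thesis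
    by (rule ordLeq_ordIso_trans[OF _ card_of_Times_same_infinite])
qed

lemma null_ideal_iff: "S \<in> null_ideal \<longleftrightarrow> (\<exists>B\<in>null_sets cantor_measure. S \<subseteq> B)"
  by (auto simp: null_ideal_def)

lemma null_ideal_insert:
  assumes "S \<in> null_ideal"
  shows "insert x S \<in> null_ideal"
proof -
  obtain B where "B \<in> null_sets cantor_measure" "S \<subseteq> B"
    using assms unfolding null_ideal_iff by blast
  then have "B \<union> {x} \<in> null_sets cantor_measure" "insert x S \<subseteq> B \<union> {x}"
    using null_sets.Un[OF _ cantor_singleton_null] by auto
  then show ?thesis
    unfolding null_ideal_iff by blast
qed

lemma card_of_Compl_null_ideal:
  assumes "S \<in> null_ideal"
  shows "|UNIV :: (nat \<Rightarrow> bool) set| \<le>o |- S|"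
proof -
  obtain B where B: "B \<in> null_sets cantor_measure" "S \<subseteq> B"
    using assms unfolding null_ideal_iff by blast
  then have "|- B| \<le>o |- S|"
    by (intro card_of_mono1) blast
  then show ?thesis
    by (rule ordLeq_transitive[OF card_of_Compl_null[OF B(1)]])
qed

interpretation null_ideal: small_set_ideal null_ideal
proof
  show "{} \<in> null_ideal"
    unfolding null_ideal_iff using null_sets.empty_sets by blast
  show "T \<in> null_ideal" if "S \<in> null_ideal" "T \<subseteq> S" for S T
    using that unfolding null_ideal_iff by blast
qed (fact null_ideal_insert card_of_Compl_null_ideal)+

theorem mainTheorem12:
  shows "(\<exists>A. maximal_antichain_in (null_ideal - {{}}) A
              \<and> (card_of A, card_of (UNIV :: (nat \<Rightarrow> bool) set)) \<in> ordIso)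
       \<and> (\<forall>A. maximal_antichain_in (null_ideal - {{}}) A
              \<longrightarrow> (card_of (UNIV :: (nat \<Rightarrow> bool) set), card_of A) \<in> ordLeq)"
  using null_ideal.exists_maximal_antichain_card_UNIV null_ideal.card_of_maximal_antichain by blast

end
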